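(* Consider a PIR scheme for a graph $G=(\mathcal{S},\mathcal{W})$. Let $S\in\mathcal{S}$ be a server of degree $\delta$ and let $S_1,\dots,S_\delta$ be any enumeration of its neighbors. Then \[ H(A_S)\ \ge\ \sum_{i=1}^{\delta}\max\Big\{0,\ L-\sum_{j=i}^{\delta}H(A_{S_j})\Big\}, \] where $A_T$ denotes the answer of server $T$.
   Context: Graph-based PIR model (non-colluding servers, 2-replication). A simple graph $G=(\mathcal{S},\mathcal{W})$ has vertex set $\mathcal{S}$ of $N$ servers and edge set $\mathcal{W}=\{W_1,\dots,W_K\}$ of files; each file is identified with the edge of the two servers storing it, $W_{T}$ denotes the set of files stored on server $T$. Files are independent, each uniform on $\mathbb{F}_2^L$. A user wants $W_\theta$, $\theta$ uniform on $[K]$ and independent of the files; it generates one query per server, $\mathcal{Q}$ denoting the set of all queries, with $\mathcal{Q}$ independent of the files. Each server $T$ returns an answer $A_T$ that is a deterministic function of its query and $W_T$. Reliability: $W_\theta$ is determined by all answers and queries. Privacy: for each server $T$, $H(\theta\mid Q_T,W_T)=\log K$. *)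

theory Defs
  imports "HOL-Probability.Probability"
begin

definition ent :: "'w pmf \<Rightarrow> ('w \<Rightarrow> 'x) \<Rightarrow> real" where
  "ent mu X = (\<Sum>x\<in>set_pmf (map_pmf X mu).
       - (pmf (map_pmf X mu) x * log 2 (pmf (map_pmf X mu) x)))"

definition cond_ent :: "'w pmf \<Rightarrow> ('w \<Rightarrow> 'x) \<Rightarrow> ('w \<Rightarrow> 'y) \<Rightarrow> real" where
  "cond_ent mu X Y = ent mu (\<lambda>w. (X w, Y w)) - ent mu Y"

text \<open>Simple graph: finite vertex set, edges are 2-element subsets of vertices.
  Files are identified with edges.\<close>
definition simple_graph :: "'s set \<Rightarrow> 's set set \<Rightarrow> bool" where
  "simple_graph V E \<longleftrightarrow> finite V \<and> (\<forall>e\<in>E. e \<subseteq> V \<and> card e = 2)"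

definition nbrs :: "'s set set \<Rightarrow> 's \<Rightarrow> 's set" where
  "nbrs E T = {U. {T, U} \<in> E}"

definition file_dist :: "'s set set \<Rightarrow> nat \<Rightarrow> ('s set \<Rightarrow> bool list) pmf" where
  "file_dist E L = Pi_pmf E [] (\<lambda>_. pmf_of_set {xs :: bool list. length xs = L})"

definition stored_files :: "'s set set \<Rightarrow> 's \<Rightarrow> ('s set \<Rightarrow> bool list) \<Rightarrow> ('s set \<Rightarrow> bool list)" where
  "stored_files E T w = (\<lambda>e. if e \<in> E \<and> T \<in> e then w e else [])"

text \<open>Sample space: ((theta, queries), files). The joint law P of (theta, Q) is arbitrary
  (it may encode the user's private randomness); files are independent of (theta, Q).\<close>
definition pir_space :: "('s set \<times> ('s \<Rightarrow> 'q)) pmf \<Rightarrow> 's set set \<Rightarrow> nat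
    \<Rightarrow> (('s set \<times> ('s \<Rightarrow> 'q)) \<times> ('s set \<Rightarrow> bool list)) pmf" where
  "pir_space P E L = pair_pmf P (file_dist E L)"

definition answer :: "'s set set \<Rightarrow> ('s \<Rightarrow> 'q \<Rightarrow> ('s set \<Rightarrow> bool list) \<Rightarrow> 'a) \<Rightarrow> 's
    \<Rightarrow> (('s set \<times> ('s \<Rightarrow> 'q)) \<times> ('s set \<Rightarrow> bool list)) \<Rightarrow> 'a" where
  "answer E ans T om = ans T (snd (fst om) T) (stored_files E T (snd om))"

definition pir_scheme :: "'s set \<Rightarrow> 's set set \<Rightarrow> nat \<Rightarrow> ('s set \<times> ('s \<Rightarrow> 'q)) pmf
    \<Rightarrow> ('s \<Rightarrow> 'q \<Rightarrow> ('s set \<Rightarrow> bool list) \<Rightarrow> 'a) \<Rightarrow> bool" where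
  "pir_scheme V E L P ans \<longleftrightarrow>
     simple_graph V E \<and> E \<noteq> {} \<and> finite (set_pmf P) \<and>
     map_pmf fst P = pmf_of_set E \<and>
     \<comment> \<open>reliability: W_theta determined by all queries and answers\<close>
     cond_ent (pir_space P E L) (\<lambda>om. snd om (fst (fst om)))
       (\<lambda>om. (\<lambda>T. if T \<in> V then Some (snd (fst om) T) else None,
              \<lambda>T. if T \<in> V then Some (answer E ans T om) else None)) = 0 \<and>
     \<comment> \<open>privacy: H(theta | Q_T, W_T) = log K for every server T\<close>
     (\<forall>T\<in>V. cond_ent (pir_space P E L) (\<lambda>om. fst (fst om))
        (\<lambda>om. (snd (fst om) T, stored_files E T (snd om))) = log 2 (real (card E)))"

end

theory Submission
  imports Defs
begin

(* Let R_i (masked i) be the collection of files with the files shared by S and S_i, ..., S_\<delta>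
   erased, and G_i = H(A_S | Q_S, R_i) (residual i), so that H(A_S) \<ge> G_1 and G_(\<delta>+1) \<ge> 0.
   Fix i and condition on \<theta> = {S, S_i}. By privacy every single query Q_T is independent of \<theta>,
   so the conditioning does not change entropies of functions of one query and the files; and as
   the files are independent of the queries, conditioning on the whole query vector Q instead of
   Q_S does not change H(A_S | -, R_i). Given Q, the answers of all servers other than
   S, S_i, ..., S_\<delta> are functions of R_i, so by reliability the requested file W = W_(S S_i) is a
   function of (Q, R_i, A_S, A_(S_i), ..., A_(S_\<delta>)). Expanding H(W, A_S | Q, R_i) in two ways gives
   L + G_(i+1) \<le> G_i + \<Sum>_(j\<ge>i) H(A_(S_j)), and conditioning gives G_(i+1) \<le> G_i. Hence the i-th
   summand of the bound is at most G_i - G_(i+1), and the sum telescopes. *)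

section \<open>Entropy of finitely supported random variables\<close>

lemma sum_set_pmf_map_pmf:
  assumes "finite (set_pmf mu)"
  shows "(\<Sum>w\<in>set_pmf mu. pmf mu w * h (X w))
       = (\<Sum>x\<in>set_pmf (map_pmf X mu). pmf (map_pmf X mu) x * h x)"
proof -
  have "(\<Sum>w\<in>set_pmf mu. h (X w) * pmf mu w) = (\<integral>w. h (X w) \<partial>measure_pmf mu)"
    using assms by (intro integral_measure_pmf_real[symmetric]) auto
  also have "\<dots> = (\<integral>x. h x \<partial>measure_pmf (map_pmf X mu))"
    by simp
  also have "\<dots> = (\<Sum>x\<in>set_pmf (map_pmf X mu). h x * pmf (map_pmf X mu) x)"
    using assms by (intro integral_measure_pmf_real) auto
  finally show ?thesis
    by (simp add: mult.commute)
qed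

lemma pmf_map_pmf_pos: "w \<in> set_pmf mu \<Longrightarrow> 0 < pmf (map_pmf X mu) (X w)"
  by (simp add: pmf_positive)

lemma ent_altdef:
  assumes "finite (set_pmf mu)"
  shows "ent mu X = - (\<Sum>w\<in>set_pmf mu. pmf mu w * log 2 (pmf (map_pmf X mu) (X w)))"
  using sum_set_pmf_map_pmf[OF assms, of "\<lambda>x. log 2 (pmf (map_pmf X mu) x)"]
  by (simp add: ent_def sum_negf)

lemma ent_const: "ent mu (\<lambda>w. c) = 0"
  by (simp add: ent_def)

lemma ent_pmf_of_set:
  assumes "map_pmf X mu = pmf_of_set A" "finite A" "A \<noteq> {}"
  shows "ent mu X = log 2 (card A)"
proof -
  have "ent mu X = (\<Sum>x\<in>A. - (1 / card A * log 2 (1 / card A)))"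
    unfolding ent_def assms(1) using assms by (intro sum.cong) auto
  also have "\<dots> = log 2 (card A)"
    using assms by (simp add: log_divide card_gt_0_iff)
  finally show ?thesis .
qed

lemma ent_distr_cong: "map_pmf X mu = map_pmf Y nu \<Longrightarrow> ent mu X = ent nu Y"
  by (simp add: ent_def)

definition determines :: "'w pmf \<Rightarrow> ('w \<Rightarrow> 'y) \<Rightarrow> ('w \<Rightarrow> 'x) \<Rightarrow> bool" where
  "determines mu Y X \<longleftrightarrow> (\<forall>w\<in>set_pmf mu. \<forall>w'\<in>set_pmf mu. Y w = Y w' \<longrightarrow> X w = X w')"

lemma determinesI:
  "(\<And>w w'. w \<in> set_pmf mu \<Longrightarrow> w' \<in> set_pmf mu \<Longrightarrow> Y w = Y w' \<Longrightarrow> X w = X w')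
    \<Longrightarrow> determines mu Y X"
  unfolding determines_def by blast

lemma determinesD:
  "determines mu Y X \<Longrightarrow> w \<in> set_pmf mu \<Longrightarrow> w' \<in> set_pmf mu \<Longrightarrow> Y w = Y w' \<Longrightarrow> X w = X w'"
  unfolding determines_def by blast

lemma pmf_map_le_if_determines:
  assumes "determines mu Y X" "w \<in> set_pmf mu"
  shows "pmf (map_pmf Y mu) (Y w) \<le> pmf (map_pmf X mu) (X w)"
proof -
  have "pmf (map_pmf Y mu) (Y w) = measure mu ({v. Y v = Y w} \<inter> set_pmf mu)"
    by (simp add: pmf_map vimage_def measure_Int_set_pmf)
  also have "\<dots> \<le> measure mu ({v. X v = X w} \<inter> set_pmf mu)"
  proof (rule measure_pmf.finite_measure_mono)
    show "{v. Y v = Y w} \<inter> set_pmf mu \<subseteq> {v. X v = X w} \<inter> set_pmf mu"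
      using assms by (auto dest: determinesD)
  qed simp
  also have "\<dots> = pmf (map_pmf X mu) (X w)"
    by (simp add: pmf_map vimage_def measure_Int_set_pmf)
  finally show ?thesis .
qed

lemma ent_mono_determines:
  assumes fin: "finite (set_pmf mu)" and "determines mu Y X"
  shows "ent mu X \<le> ent mu Y"
proof -
  have "log 2 (pmf (map_pmf Y mu) (Y w)) \<le> log 2 (pmf (map_pmf X mu) (X w))"
    if "w \<in> set_pmf mu" for w
    using pmf_map_le_if_determines[OF assms(2) that] that by (intro log_mono) (auto simp: pmf_positive)
  then show ?thesis
    unfolding ent_altdef[OF fin] by (simp add: sum_mono mult_left_mono)
qed

lemma ent_eq_determines:
  "finite (set_pmf mu) \<Longrightarrow> determines mu X Y \<Longrightarrow> determines mu Y X \<Longrightarrow> ent mu X = ent mu Y"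
  using ent_mono_determines by (metis order_antisym)

lemma log2_ratio_le:
  fixes a b :: real
  assumes "0 < a" "0 < b"
  shows "a * log 2 (b / a) \<le> (b - a) / ln 2"
proof -
  have "ln (b / a) \<le> b / a - 1"
    using assms by (intro ln_le_minus_one) simp
  then have "a * ln (b / a) \<le> b - a"
    using assms by (simp add: field_simps)
  then show ?thesis
    by (simp add: log_def divide_right_mono)
qed

lemma log2_ratio_eq_imp_eq:
  fixes a b :: real
  assumes "0 < a" "0 < b" "a * log 2 (b / a) = (b - a) / ln 2"
  shows "a = b"
proof -
  have "a * ln (b / a) = b - a"
    using assms(3) by (simp add: log_def)
  then have "ln (b / a) = b / a - 1"
    using assms(1) by (simp add: field_simps)
  then have "b / a = 1"
    using assms by (intro ln_eq_minus_one) simp_all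
  then show ?thesis
    using assms(1) by simp
qed

context
  fixes p :: "'a pmf" and q :: "'a \<Rightarrow> real"
  assumes fin: "finite (set_pmf p)"
    and q_pos: "\<And>x. x \<in> set_pmf p \<Longrightarrow> 0 < q x"
    and q_sum: "(\<Sum>x\<in>set_pmf p. q x) \<le> 1"
begin

private lemma gibbs_split:
  "(\<Sum>x\<in>set_pmf p. pmf p x * log 2 (q x)) - (\<Sum>x\<in>set_pmf p. pmf p x * log 2 (pmf p x))
     = (\<Sum>x\<in>set_pmf p. pmf p x * log 2 (q x / pmf p x))"
  and gibbs_bound: "(\<Sum>x\<in>set_pmf p. (q x - pmf p x) / ln 2) \<le> 0"
proof -
  show "(\<Sum>x\<in>set_pmf p. pmf p x * log 2 (q x)) - (\<Sum>x\<in>set_pmf p. pmf p x * log 2 (pmf p x))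
     = (\<Sum>x\<in>set_pmf p. pmf p x * log 2 (q x / pmf p x))"
    unfolding sum_subtractf[symmetric]
  proof (intro sum.cong refl)
    fix x assume "x \<in> set_pmf p"
    then have "0 < q x" "0 < pmf p x"
      by (simp_all add: q_pos pmf_positive)
    then show "pmf p x * log 2 (q x) - pmf p x * log 2 (pmf p x) = pmf p x * log 2 (q x / pmf p x)"
      by (simp add: log_divide right_diff_distrib)
  qed
  have "(\<Sum>x\<in>set_pmf p. (q x - pmf p x) / ln 2) = ((\<Sum>x\<in>set_pmf p. q x) - 1) / ln 2"
    using fin by (simp add: sum_divide_distrib[symmetric] sum_subtractf sum_pmf_eq_1)
  then show "(\<Sum>x\<in>set_pmf p. (q x - pmf p x) / ln 2) \<le> 0"
    using q_sum by (simp add: divide_nonpos_pos)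
qed

lemma gibbs_inequality:
  "(\<Sum>x\<in>set_pmf p. pmf p x * log 2 (q x)) \<le> (\<Sum>x\<in>set_pmf p. pmf p x * log 2 (pmf p x))"
proof -
  have "(\<Sum>x\<in>set_pmf p. pmf p x * log 2 (q x / pmf p x)) \<le> (\<Sum>x\<in>set_pmf p. (q x - pmf p x) / ln 2)"
    using q_pos by (intro sum_mono log2_ratio_le) (simp_all add: pmf_positive)
  then show ?thesis
    using gibbs_split gibbs_bound by linarith
qed

lemma gibbs_equality:
  assumes eq: "(\<Sum>x\<in>set_pmf p. pmf p x * log 2 (q x)) = (\<Sum>x\<in>set_pmf p. pmf p x * log 2 (pmf p x))"
    and x: "x \<in> set_pmf p"
  shows "q x = pmf p x"
proof -
  define gap where "gap x = (q x - pmf p x) / ln 2 - pmf p x * log 2 (q x / pmf p x)" for x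
  have gap_nonneg: "0 \<le> gap x" if "x \<in> set_pmf p" for x
    using log2_ratio_le[of "pmf p x" "q x"] q_pos[OF that] that
    by (simp add: gap_def pmf_positive)
  have "(\<Sum>x\<in>set_pmf p. gap x) \<le> 0"
    using gibbs_split gibbs_bound eq unfolding gap_def sum_subtractf by linarith
  then have "(\<Sum>x\<in>set_pmf p. gap x) = 0"
    using gap_nonneg by (meson antisym sum_nonneg)
  then have "gap x = 0"
    using fin gap_nonneg x by (simp add: sum_nonneg_eq_0_iff)
  then have "pmf p x * log 2 (q x / pmf p x) = (q x - pmf p x) / ln 2"
    by (simp add: gap_def)
  then show ?thesis
    using x q_pos[OF x] log2_ratio_eq_imp_eq[of "pmf p x" "q x"] by (simp add: pmf_positive)
qed

end

lemma
  assumes fin: "finite (set_pmf mu)"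
    and pos: "\<And>w. w \<in> set_pmf mu \<Longrightarrow> 0 < q (X w)"
    and sum: "(\<Sum>x\<in>set_pmf (map_pmf X mu). q x) \<le> 1"
  shows ent_le_cross_ent: "ent mu X \<le> - (\<Sum>w\<in>set_pmf mu. pmf mu w * log 2 (q (X w)))"
    and ent_eq_cross_entD: "ent mu X = - (\<Sum>w\<in>set_pmf mu. pmf mu w * log 2 (q (X w)))
           \<Longrightarrow> w \<in> set_pmf mu \<Longrightarrow> q (X w) = pmf (map_pmf X mu) (X w)"
proof -
  have fin': "finite (set_pmf (map_pmf X mu))"
    using fin by simp
  have pos': "\<And>x. x \<in> set_pmf (map_pmf X mu) \<Longrightarrow> 0 < q x"
    using pos by auto
  have cross: "(\<Sum>w\<in>set_pmf mu. pmf mu w * log 2 (q (X w)))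
      = (\<Sum>x\<in>set_pmf (map_pmf X mu). pmf (map_pmf X mu) x * log 2 (q x))"
    by (rule sum_set_pmf_map_pmf[OF fin])
  have ent: "ent mu X = - (\<Sum>x\<in>set_pmf (map_pmf X mu). pmf (map_pmf X mu) x * log 2 (pmf (map_pmf X mu) x))"
    by (simp add: ent_def sum_negf)
  show "ent mu X \<le> - (\<Sum>w\<in>set_pmf mu. pmf mu w * log 2 (q (X w)))"
    unfolding cross ent using gibbs_inequality[OF fin' pos' sum] by simp
  show "q (X w) = pmf (map_pmf X mu) (X w)"
    if "ent mu X = - (\<Sum>w\<in>set_pmf mu. pmf mu w * log 2 (q (X w)))" and "w \<in> set_pmf mu"
    using that gibbs_equality[OF fin' pos' sum] unfolding cross ent by simp
qed

lemma pmf_eq_if_eq_on_set_pmf: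
  assumes fin: "finite (set_pmf p)" and eq: "\<And>x. x \<in> set_pmf p \<Longrightarrow> pmf p x = pmf q x"
  shows "p = q"
proof (rule pmf_eqI)
  fix x
  show "pmf p x = pmf q x"
  proof (cases "x \<in> set_pmf p")
    case False
    have "sum (pmf q) (set_pmf p) = 1"
      using fin eq sum_pmf_eq_1[OF fin, of p] by simp
    moreover have "sum (pmf q) (insert x (set_pmf p)) \<le> 1"
      using fin by (simp flip: measure_measure_pmf_finite)
    ultimately have "pmf q x \<le> 0"
      using fin False by simp
    then have "pmf q x = 0"
      using pmf_nonneg[of q x] by linarith
    then show ?thesis
      using False by (metis pmf_eq_0_set_pmf)
  qed (rule eq)
qed

lemma pmf_map_snd_eq_sum:
  assumes "finite A" "fst ` set_pmf M \<subseteq> A"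
  shows "pmf (map_pmf snd M) z = (\<Sum>y\<in>A. pmf M (y, z))"
proof -
  have "snd -` {z} \<inter> set_pmf M = (A \<times> {z}) \<inter> set_pmf M"
    using assms(2) by force
  then have "pmf (map_pmf snd M) z = measure M ((A \<times> {z}) \<inter> set_pmf M)"
    by (metis pmf_map measure_Int_set_pmf)
  also have "\<dots> = sum (pmf M) (A \<times> {z})"
    using assms(1) by (simp add: measure_Int_set_pmf measure_measure_pmf_finite)
  also have "\<dots> = (\<Sum>y\<in>A. pmf M (y, z))"
    by (simp add: sum.cartesian_product')
  finally show ?thesis .
qed

lemma
  assumes fin: "finite (set_pmf mu)"
  shows ent_pair_le: "ent mu (\<lambda>w. (X w, Y w)) \<le> ent mu X + ent mu Y"
    and ent_pair_eq_iff_indep: "ent mu (\<lambda>w. (X w, Y w)) = ent mu X + ent mu Y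
      \<longleftrightarrow> map_pmf (\<lambda>w. (X w, Y w)) mu = pair_pmf (map_pmf X mu) (map_pmf Y mu)"
proof -
  let ?XY = "\<lambda>w. (X w, Y w)"
  let ?prod = "pair_pmf (map_pmf X mu) (map_pmf Y mu)"
  have pos: "0 < pmf ?prod (?XY w)" if "w \<in> set_pmf mu" for w
    using that by (simp add: pmf_pair pmf_positive)
  have "(\<Sum>t\<in>set_pmf (map_pmf ?XY mu). pmf ?prod t) \<le> (\<Sum>t\<in>set_pmf ?prod. pmf ?prod t)"
    using fin by (intro sum_mono2) auto
  also have "\<dots> = 1"
    using fin by (intro sum_pmf_eq_1) auto
  finally have sum: "(\<Sum>t\<in>set_pmf (map_pmf ?XY mu). pmf ?prod t) \<le> 1" .
  have "log 2 (pmf ?prod (?XY w)) = log 2 (pmf (map_pmf X mu) (X w)) + log 2 (pmf (map_pmf Y mu) (Y w))"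
    if "w \<in> set_pmf mu" for w
    using pmf_map_pmf_pos[OF that, of X] pmf_map_pmf_pos[OF that, of Y] by (simp add: pmf_pair log_mult)
  then have cross: "- (\<Sum>w\<in>set_pmf mu. pmf mu w * log 2 (pmf ?prod (?XY w))) = ent mu X + ent mu Y"
    unfolding ent_altdef[OF fin] by (simp add: distrib_left sum.distrib cong: sum.cong)
  show "ent mu ?XY \<le> ent mu X + ent mu Y"
    using ent_le_cross_ent[OF fin, of "pmf ?prod" ?XY] pos sum cross by simp
  show "ent mu ?XY = ent mu X + ent mu Y \<longleftrightarrow> map_pmf ?XY mu = ?prod"
  proof
    assume "ent mu ?XY = ent mu X + ent mu Y"
    then have "pmf ?prod (?XY w) = pmf (map_pmf ?XY mu) (?XY w)" if "w \<in> set_pmf mu" for w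
      using ent_eq_cross_entD[OF fin, of "pmf ?prod" ?XY] pos sum cross that by simp
    then show "map_pmf ?XY mu = ?prod"
      using fin by (intro pmf_eq_if_eq_on_set_pmf) auto
  next
    assume "map_pmf ?XY mu = ?prod"
    then show "ent mu ?XY = ent mu X + ent mu Y"
      using cross by (simp add: ent_altdef[OF fin])
  qed
qed

lemma ent_submodular:
  assumes fin: "finite (set_pmf mu)"
  shows "ent mu (\<lambda>w. (X w, Y w, Z w)) + ent mu Z \<le> ent mu (\<lambda>w. (X w, Z w)) + ent mu (\<lambda>w. (Y w, Z w))"
proof -
  let ?XYZ = "\<lambda>w. (X w, Y w, Z w)"
  let ?XZ = "\<lambda>w. (X w, Z w)"
  let ?YZ = "\<lambda>w. (Y w, Z w)"
  define q where "q t = pmf (map_pmf ?XZ mu) (fst t, snd (snd t)) * pmf (map_pmf ?YZ mu) (snd t)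
      / pmf (map_pmf Z mu) (snd (snd t))" for t
  have pos: "0 < q (?XYZ w)" if "w \<in> set_pmf mu" for w
    using that by (simp add: q_def pmf_positive)
  have log_q: "log 2 (q (?XYZ w)) = log 2 (pmf (map_pmf ?XZ mu) (?XZ w))
      + log 2 (pmf (map_pmf ?YZ mu) (?YZ w)) - log 2 (pmf (map_pmf Z mu) (Z w))" if "w \<in> set_pmf mu" for w
    using pmf_map_pmf_pos[OF that, of ?XZ] pmf_map_pmf_pos[OF that, of ?YZ] pmf_map_pmf_pos[OF that, of Z]
    by (simp add: q_def log_mult log_divide)
  have "(\<Sum>w\<in>set_pmf mu. pmf mu w * log 2 (q (?XYZ w)))
      = (\<Sum>w\<in>set_pmf mu. pmf mu w * log 2 (pmf (map_pmf ?XZ mu) (?XZ w)))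
        + (\<Sum>w\<in>set_pmf mu. pmf mu w * log 2 (pmf (map_pmf ?YZ mu) (?YZ w)))
        - (\<Sum>w\<in>set_pmf mu. pmf mu w * log 2 (pmf (map_pmf Z mu) (Z w)))"
    by (simp add: log_q algebra_simps sum.distrib sum_subtractf cong: sum.cong)
  then have cross: "- (\<Sum>w\<in>set_pmf mu. pmf mu w * log 2 (q (?XYZ w))) = ent mu ?XZ + ent mu ?YZ - ent mu Z"
    unfolding ent_altdef[OF fin] by simp
  have "(\<Sum>t\<in>set_pmf (map_pmf ?XYZ mu). q t) \<le> 1"
  proof -
    let ?B = "set_pmf (map_pmf Y mu)"
    let ?phi = "\<lambda>((x, z), y). (x, y, z)"
    have "set_pmf (map_pmf ?XYZ mu) \<subseteq> ?phi ` (set_pmf (map_pmf ?XZ mu) \<times> ?B)"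
      by force
    then have "(\<Sum>t\<in>set_pmf (map_pmf ?XYZ mu). q t) \<le> (\<Sum>t\<in>?phi ` (set_pmf (map_pmf ?XZ mu) \<times> ?B). q t)"
      using fin by (intro sum_mono2) (auto simp: q_def)
    also have "\<dots> = (\<Sum>xz\<in>set_pmf (map_pmf ?XZ mu). \<Sum>y\<in>?B. q (fst xz, y, snd xz))"
      by (subst sum.reindex) (auto simp: inj_on_def sum.cartesian_product' split_beta)
    also have "\<dots> = (\<Sum>xz\<in>set_pmf (map_pmf ?XZ mu). pmf (map_pmf ?XZ mu) xz)"
    proof (intro sum.cong refl)
      fix xz assume "xz \<in> set_pmf (map_pmf ?XZ mu)"
      then have "0 < pmf (map_pmf Z mu) (snd xz)"
        by (auto simp: pmf_positive)
      moreover have "(\<Sum>y\<in>?B. pmf (map_pmf ?YZ mu) (y, snd xz)) = pmf (map_pmf Z mu) (snd xz)"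
        using fin pmf_map_snd_eq_sum[of ?B "map_pmf ?YZ mu" "snd xz"] by (simp add: map_pmf_comp image_image)
      ultimately show "(\<Sum>y\<in>?B. q (fst xz, y, snd xz)) = pmf (map_pmf ?XZ mu) xz"
        by (simp add: q_def sum_divide_distrib[symmetric] sum_distrib_left[symmetric])
    qed
    also have "\<dots> = 1"
      using fin by (intro sum_pmf_eq_1) auto
    finally show ?thesis .
  qed
  then show ?thesis
    using ent_le_cross_ent[OF fin, of q ?XYZ] pos cross by simp
qed

lemma determines_if_ent_pair_eq:
  assumes fin: "finite (set_pmf mu)" and eq: "ent mu (\<lambda>w. (X w, Y w)) = ent mu Y"
  shows "determines mu Y X"
proof -
  let ?XY = "\<lambda>w. (X w, Y w)"
  define gap where "gap w = log 2 (pmf (map_pmf Y mu) (Y w)) - log 2 (pmf (map_pmf ?XY mu) (?XY w))" for w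
  have gap_nonneg: "0 \<le> pmf mu w * gap w" if "w \<in> set_pmf mu" for w
  proof -
    have "determines mu ?XY Y"
      by (rule determinesI) simp
    then have "pmf (map_pmf ?XY mu) (?XY w) \<le> pmf (map_pmf Y mu) (Y w)"
      using that by (rule pmf_map_le_if_determines)
    then show ?thesis
      using pmf_map_pmf_pos[OF that, of ?XY] pmf_map_pmf_pos[OF that, of Y] by (simp add: gap_def)
  qed
  have "(\<Sum>w\<in>set_pmf mu. pmf mu w * gap w) = ent mu ?XY - ent mu Y"
    unfolding ent_altdef[OF fin] gap_def by (simp add: right_diff_distrib sum_subtractf)
  then have "(\<Sum>w\<in>set_pmf mu. pmf mu w * gap w) = 0"
    using eq by simp
  then have gap_zero: "pmf mu w * gap w = 0" if "w \<in> set_pmf mu" for w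
    using fin gap_nonneg that by (simp add: sum_nonneg_eq_0_iff)
  have same: "pmf (map_pmf ?XY mu) (?XY w) = pmf (map_pmf Y mu) (Y w)" if "w \<in> set_pmf mu" for w
  proof -
    have "log 2 (pmf (map_pmf ?XY mu) (?XY w)) = log 2 (pmf (map_pmf Y mu) (Y w))"
      using gap_zero[OF that] pmf_positive[OF that] by (simp add: gap_def)
    then show ?thesis
      using pmf_map_pmf_pos[OF that, of ?XY] pmf_map_pmf_pos[OF that, of Y]
      by (auto intro: inj_onD[OF log_inj[of 2]])
  qed
  show ?thesis
  proof (rule determinesI, rule ccontr)
    fix w w' assume w: "w \<in> set_pmf mu" and w': "w' \<in> set_pmf mu" and "Y w = Y w'" "X w \<noteq> X w'"
    then have "{v. ?XY v = ?XY w} \<union> {w'} \<subseteq> {v. Y v = Y w}" "{v. ?XY v = ?XY w} \<inter> {w'} = {}"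
      by auto
    then have "measure mu {v. ?XY v = ?XY w} + measure mu {w'} \<le> measure mu {v. Y v = Y w}"
      by (metis measure_pmf.finite_measure_mono measure_pmf.finite_measure_Union sets_measure_pmf UNIV_I)
    then have "pmf (map_pmf ?XY mu) (?XY w) + pmf mu w' \<le> pmf (map_pmf Y mu) (Y w)"
      by (simp add: pmf_map vimage_def measure_pmf_single)
    then show False
      using same[OF w] pmf_positive[OF w'] by simp
  qed
qed

lemma ent_restrict_le_sum:
  assumes fin: "finite (set_pmf mu)" and "finite K"
  shows "ent mu (\<lambda>w. restrict (\<lambda>k. X k w) K) \<le> (\<Sum>k\<in>K. ent mu (X k))"
  using \<open>finite K\<close>
proof (induction K rule: finite_induct)
  case empty
  then show ?case
    by (simp add: ent_const)
next
  case (insert k K)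
  have "ent mu (\<lambda>w. restrict (\<lambda>j. X j w) (insert k K)) = ent mu (\<lambda>w. (X k w, restrict (\<lambda>j. X j w) K))"
    using fin by (intro ent_eq_determines determinesI) (auto simp: restrict_def fun_eq_iff split: if_splits)
  also have "\<dots> \<le> ent mu (X k) + ent mu (\<lambda>w. restrict (\<lambda>j. X j w) K)"
    by (rule ent_pair_le[OF fin])
  also have "\<dots> \<le> ent mu (X k) + (\<Sum>j\<in>K. ent mu (X j))"
    by (rule add_left_mono[OF insert.IH])
  also have "\<dots> = (\<Sum>j\<in>insert k K. ent mu (X j))"
    using insert.hyps by simp
  finally show ?case .
qed

section \<open>Conditional entropy\<close>

context
  fixes mu :: "'w pmf"
  assumes fin: "finite (set_pmf mu)"
begin

lemma cond_ent_nonneg: "0 \<le> cond_ent mu X Y"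
  using ent_mono_determines[OF fin, of "\<lambda>w. (X w, Y w)" Y]
  by (auto simp: cond_ent_def intro: determinesI)

lemma cond_ent_le_ent: "cond_ent mu X Y \<le> ent mu X"
  using ent_pair_le[OF fin, of X Y] by (simp add: cond_ent_def)

lemma cond_ent_eq_ent_iff_indep:
  "cond_ent mu X Y = ent mu X
    \<longleftrightarrow> map_pmf (\<lambda>w. (X w, Y w)) mu = pair_pmf (map_pmf X mu) (map_pmf Y mu)"
  using ent_pair_eq_iff_indep[OF fin, of X Y] by (auto simp: cond_ent_def)

lemma determines_if_cond_ent_eq_0: "cond_ent mu X Y = 0 \<Longrightarrow> determines mu Y X"
  by (rule determines_if_ent_pair_eq[OF fin]) (simp add: cond_ent_def)

lemma cond_ent_cong:
  assumes "determines mu Y Y'" "determines mu Y' Y"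
  shows "cond_ent mu X Y = cond_ent mu X Y'"
proof -
  have "ent mu (\<lambda>w. (X w, Y w)) = ent mu (\<lambda>w. (X w, Y' w))"
    using fin assms by (intro ent_eq_determines determinesI) (auto dest: determinesD)
  moreover have "ent mu Y = ent mu Y'"
    using fin assms by (rule ent_eq_determines)
  ultimately show ?thesis
    by (simp add: cond_ent_def)
qed

lemma cond_ent_pair_commute:
  "cond_ent mu (\<lambda>w. (X w, Y w)) Z = cond_ent mu (\<lambda>w. (Y w, X w)) Z"
  unfolding cond_ent_def using fin by (subst ent_eq_determines) (auto intro: determinesI)

lemma cond_ent_pair_le: "cond_ent mu X (\<lambda>w. (Y w, Z w)) \<le> cond_ent mu X Y"
proof -
  have "ent mu (\<lambda>w. (X w, Z w, Y w)) + ent mu Y \<le> ent mu (\<lambda>w. (X w, Y w)) + ent mu (\<lambda>w. (Z w, Y w))"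
    by (rule ent_submodular[OF fin])
  moreover have "ent mu (\<lambda>w. (X w, Z w, Y w)) = ent mu (\<lambda>w. (X w, Y w, Z w))"
    using fin by (intro ent_eq_determines determinesI) auto
  moreover have "ent mu (\<lambda>w. (Z w, Y w)) = ent mu (\<lambda>w. (Y w, Z w))"
    using fin by (intro ent_eq_determines determinesI) auto
  ultimately show ?thesis
    by (simp add: cond_ent_def)
qed

lemma cond_ent_le_cond_ent_comp: "cond_ent mu X Y \<le> cond_ent mu X (\<lambda>w. f (Y w))"
proof -
  have "cond_ent mu X Y = cond_ent mu X (\<lambda>w. (f (Y w), Y w))"
    using fin by (intro cond_ent_cong determinesI) auto
  also have "\<dots> \<le> cond_ent mu X (\<lambda>w. f (Y w))"
    by (rule cond_ent_pair_le)
  finally show ?thesis .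
qed

lemma cond_ent_chain:
  "cond_ent mu (\<lambda>w. (X w, Y w)) Z = cond_ent mu X Z + cond_ent mu Y (\<lambda>w. (Z w, X w))"
proof -
  have "ent mu (\<lambda>w. ((X w, Y w), Z w)) = ent mu (\<lambda>w. (Y w, Z w, X w))"
    using fin by (intro ent_eq_determines determinesI) auto
  moreover have "ent mu (\<lambda>w. (X w, Z w)) = ent mu (\<lambda>w. (Z w, X w))"
    using fin by (intro ent_eq_determines determinesI) auto
  ultimately show ?thesis
    by (simp add: cond_ent_def)
qed

lemma cond_ent_le_if_determines:
  assumes "determines mu (\<lambda>w. (Z w, Y w)) X"
  shows "cond_ent mu X Z \<le> cond_ent mu Y Z"
proof -
  have "ent mu (\<lambda>w. (X w, Z w)) \<le> ent mu (\<lambda>w. (Y w, Z w))"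
    using assms by (intro ent_mono_determines[OF fin] determinesI) (auto dest: determinesD)
  then show ?thesis
    by (simp add: cond_ent_def)
qed

end

section \<open>Random variables on product spaces\<close>

lemma map_pmf_fst_pair_pmf: "map_pmf (\<lambda>w. f (fst w)) (pair_pmf A B) = map_pmf f A"
  by (metis map_fst_pair_pmf map_pmf_comp)

lemma map_pmf_snd_pair_pmf: "map_pmf (\<lambda>w. g (snd w)) (pair_pmf A B) = map_pmf g B"
  by (metis map_snd_pair_pmf map_pmf_comp)

lemma ent_pair_pmf_indep:
  assumes "finite (set_pmf A)" "finite (set_pmf B)"
  shows "ent (pair_pmf A B) (\<lambda>w. (f (fst w), g (snd w)))
       = ent (pair_pmf A B) (\<lambda>w. f (fst w)) + ent (pair_pmf A B) (\<lambda>w. g (snd w))"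
proof -
  have "map_pmf (\<lambda>w. (f (fst w), g (snd w))) (pair_pmf A B) = pair_pmf (map_pmf f A) (map_pmf g B)"
    by (simp add: map_pair[symmetric] split_beta')
  then show ?thesis
    using assms by (subst ent_pair_eq_iff_indep) (simp_all add: map_pmf_fst_pair_pmf map_pmf_snd_pair_pmf)
qed

lemma ent_pair_pmf_cong:
  assumes "map_pmf s A = map_pmf s A'"
  shows "ent (pair_pmf A B) (\<lambda>w. h (s (fst w)) (snd w)) = ent (pair_pmf A' B) (\<lambda>w. h (s (fst w)) (snd w))"
proof (rule ent_distr_cong)
  have "map_pmf (\<lambda>w. h (s (fst w)) (snd w)) (pair_pmf M B)
      = map_pmf (case_prod h) (map_pmf (\<lambda>(a, b). (s a, id b)) (pair_pmf M B))" for M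
    by (simp add: map_pmf_comp split_beta)
  also have "\<dots> M = map_pmf (case_prod h) (pair_pmf (map_pmf s M) B)" for M
    unfolding map_pair by simp
  finally show "map_pmf (\<lambda>w. h (s (fst w)) (snd w)) (pair_pmf A B)
      = map_pmf (\<lambda>w. h (s (fst w)) (snd w)) (pair_pmf A' B)"
    using assms by simp
qed

lemma cond_ent_pair_pmf_cong:
  assumes "map_pmf s A = map_pmf s A'"
  shows "cond_ent (pair_pmf A B) (\<lambda>w. y (s (fst w)) (snd w)) (\<lambda>w. (s (fst w), z (s (fst w)) (snd w)))
       = cond_ent (pair_pmf A' B) (\<lambda>w. y (s (fst w)) (snd w)) (\<lambda>w. (s (fst w), z (s (fst w)) (snd w)))"
  unfolding cond_ent_def
  using ent_pair_pmf_cong[OF assms, of B "\<lambda>a b. (y a b, a, z a b)"]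
    ent_pair_pmf_cong[OF assms, of B "\<lambda>a b. (a, z a b)"] by simp

(* Given s (fst w), the conditioned variable depends only on the independent component snd w,
   so conditioning on all of fst w gains nothing. *)
lemma cond_ent_pair_pmf_markov:
  assumes fin: "finite (set_pmf A)" "finite (set_pmf B)"
  shows "cond_ent (pair_pmf A B) (\<lambda>w. v (s (fst w)) (snd w)) fst
       = cond_ent (pair_pmf A B) (\<lambda>w. v (s (fst w)) (snd w)) (\<lambda>w. s (fst w))"
proof -
  let ?mu = "pair_pmf A B"
  let ?T = "\<lambda>w. s (fst w)"
  let ?V = "\<lambda>w. v (s (fst w)) (snd w)"
  have finmu: "finite (set_pmf ?mu)"
    using fin by simp
  have "ent ?mu (\<lambda>w. (snd w, fst w, ?T w, ?V w)) + ent ?mu (\<lambda>w. (?T w, ?V w))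
      \<le> ent ?mu (\<lambda>w. (snd w, ?T w, ?V w)) + ent ?mu (\<lambda>w. (fst w, ?T w, ?V w))"
    by (rule ent_submodular[OF finmu])
  moreover have "ent ?mu (\<lambda>w. (snd w, fst w, ?T w, ?V w)) = ent ?mu fst + ent ?mu snd"
  proof -
    have "ent ?mu (\<lambda>w. (snd w, fst w, ?T w, ?V w)) = ent ?mu (\<lambda>w. (fst w, snd w))"
      using finmu by (intro ent_eq_determines determinesI) auto
    then show ?thesis
      using ent_pair_pmf_indep[OF fin, of "\<lambda>a. a" "\<lambda>b. b"] by simp
  qed
  moreover have "ent ?mu (\<lambda>w. (snd w, ?T w, ?V w)) = ent ?mu ?T + ent ?mu snd"
  proof -
    have "ent ?mu (\<lambda>w. (snd w, ?T w, ?V w)) = ent ?mu (\<lambda>w. (?T w, snd w))"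
      using finmu by (intro ent_eq_determines determinesI) auto
    then show ?thesis
      using ent_pair_pmf_indep[OF fin, of s "\<lambda>b. b"] by simp
  qed
  moreover have "ent ?mu (\<lambda>w. (fst w, ?T w, ?V w)) = ent ?mu (\<lambda>w. (?V w, fst w))"
    using finmu by (intro ent_eq_determines determinesI) auto
  moreover have "ent ?mu (\<lambda>w. (?T w, ?V w)) = ent ?mu (\<lambda>w. (?V w, ?T w))"
    using finmu by (intro ent_eq_determines determinesI) auto
  ultimately have "cond_ent ?mu ?V ?T \<le> cond_ent ?mu ?V fst"
    by (simp add: cond_ent_def)
  with cond_ent_le_cond_ent_comp[OF finmu, of ?V fst s] show ?thesis
    by simp
qed

lemma cond_ent_pair_pmf_markov':
  assumes fin: "finite (set_pmf A)" "finite (set_pmf B)"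
  shows "cond_ent (pair_pmf A B) (\<lambda>w. y (s (fst w)) (snd w)) (\<lambda>w. (fst w, z (s (fst w)) (snd w)))
       = cond_ent (pair_pmf A B) (\<lambda>w. y (s (fst w)) (snd w)) (\<lambda>w. (s (fst w), z (s (fst w)) (snd w)))"
proof -
  have finmu: "finite (set_pmf (pair_pmf A B))"
    using fin by simp
  have chain: "cond_ent (pair_pmf A B) (\<lambda>w. y (s (fst w)) (snd w)) (\<lambda>w. (C w, z (s (fst w)) (snd w)))
      = cond_ent (pair_pmf A B) (\<lambda>w. (z (s (fst w)) (snd w), y (s (fst w)) (snd w))) C
        - cond_ent (pair_pmf A B) (\<lambda>w. z (s (fst w)) (snd w)) C" for C :: "_ \<Rightarrow> 'r"
    using cond_ent_chain[OF finmu, of "\<lambda>w. z (s (fst w)) (snd w)" "\<lambda>w. y (s (fst w)) (snd w)" C] by simp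
  show ?thesis
    using chain[of fst] chain[of "\<lambda>w. s (fst w)"] cond_ent_pair_pmf_markov[OF fin, of "\<lambda>a b. (z a b, y a b)" s]
      cond_ent_pair_pmf_markov[OF fin, of z s] by simp
qed

lemma map_pmf_cond_pmf_indep:
  assumes indep: "map_pmf (\<lambda>x. (f x, g x)) p = pair_pmf (map_pmf f p) (map_pmf g p)"
    and e: "e \<in> f ` set_pmf p"
  shows "map_pmf g (cond_pmf p {x. f x = e}) = map_pmf g p"
proof (rule pmf_eqI)
  fix y
  have ne: "set_pmf p \<inter> {x. f x = e} \<noteq> {}"
    using e by auto
  have pos: "0 < pmf (map_pmf f p) e"
    using e by (auto simp: pmf_positive)
  have "pmf (map_pmf g (cond_pmf p {x. f x = e})) y
      = measure p ({x. f x = e} \<inter> g -` {y}) / measure p {x. f x = e}"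
    using ne by (simp add: pmf_map cond_pmf.rep_eq emeasure_measure_pmf_not_zero)
  also have "\<dots> = pmf (map_pmf (\<lambda>x. (f x, g x)) p) (e, y) / pmf (map_pmf f p) e"
    by (simp add: pmf_map vimage_def Int_def conj_commute)
  also have "\<dots> = pmf (map_pmf g p) y"
    using pos by (simp add: indep pmf_pair)
  finally show "pmf (map_pmf g (cond_pmf p {x. f x = e})) y = pmf (map_pmf g p) y" .
qed

section \<open>PIR schemes\<close>

locale pir =
  fixes V :: "'s set" and E :: "'s set set" and L :: nat
    and P :: "('s set \<times> ('s \<Rightarrow> 'q)) pmf"
    and ans :: "'s \<Rightarrow> 'q \<Rightarrow> ('s set \<Rightarrow> bool list) \<Rightarrow> 'a"
  assumes scheme: "pir_scheme V E L P ans"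
begin

abbreviation query :: "'s \<Rightarrow> ('s set \<times> ('s \<Rightarrow> 'q)) \<times> ('s set \<Rightarrow> bool list) \<Rightarrow> 'q" where
  "query T w \<equiv> snd (fst w) T"

definition pir_space_given :: "'s set \<Rightarrow> (('s set \<times> ('s \<Rightarrow> 'q)) \<times> ('s set \<Rightarrow> bool list)) pmf" where
  "pir_space_given e = pair_pmf (cond_pmf P {p. fst p = e}) (file_dist E L)"

lemma answer_altdef: "answer E ans T = (\<lambda>w. ans T (query T w) (stored_files E T (snd w)))"
  by (rule ext) (simp add: answer_def)

lemma finite_E: "finite E"
proof -
  have "finite V" "E \<subseteq> Pow V"
    using scheme by (auto simp: pir_scheme_def simple_graph_def)
  then show ?thesis
    by (meson finite_Pow_iff finite_subset)
qed

lemma finite_set_pmf_file_dist: "finite (set_pmf (file_dist E L))"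
proof -
  have "finite {xs :: bool list. length xs = L}"
    using finite_lists_length_eq[of "UNIV :: bool set" L] by simp
  moreover have "{xs :: bool list. length xs = L} \<noteq> {}"
    by (auto intro: exI[of _ "replicate L False"])
  ultimately show ?thesis
    using finite_E by (auto simp: file_dist_def set_Pi_pmf comp_def)
qed

lemma finite_set_pmf_pir_space: "finite (set_pmf (pir_space P E L))"
  using scheme finite_set_pmf_file_dist by (simp add: pir_scheme_def pir_space_def)

lemma theta_event_nonempty: "e \<in> E \<Longrightarrow> set_pmf P \<inter> {p. fst p = e} \<noteq> {}"
proof -
  assume "e \<in> E"
  then have "e \<in> set_pmf (map_pmf fst P)"
    using scheme finite_E by (simp add: pir_scheme_def)
  then show ?thesis
    by auto
qed

lemma set_pmf_pir_space_given:
  assumes "e \<in> E"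
  shows "set_pmf (pir_space_given e) = {w \<in> set_pmf (pir_space P E L). fst (fst w) = e}"
proof -
  have "set_pmf (cond_pmf P {p. fst p = e}) = set_pmf P \<inter> {p. fst p = e}"
    using theta_event_nonempty[OF assms] by (rule set_cond_pmf)
  moreover have "(A \<inter> {p. fst p = e}) \<times> C = {w \<in> A \<times> C. fst (fst w) = e}" for A C
    by auto
  ultimately show ?thesis
    by (simp only: pir_space_given_def pir_space_def set_pair_pmf)
qed

lemma finite_set_pmf_cond_theta: "e \<in> E \<Longrightarrow> finite (set_pmf (cond_pmf P {p. fst p = e}))"
  using scheme by (simp add: pir_scheme_def set_cond_pmf[OF theta_event_nonempty])

lemma finite_set_pmf_pir_space_given: "e \<in> E \<Longrightarrow> finite (set_pmf (pir_space_given e))"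
  using finite_set_pmf_pir_space by (simp add: set_pmf_pir_space_given)

lemma file_dist_split:
  assumes e: "e \<in> E" and m: "\<And>F y. m (F(e := y)) = m F"
  shows "map_pmf (\<lambda>F. (m F, F e)) (file_dist E L)
       = pair_pmf (map_pmf m (file_dist E L)) (pmf_of_set {xs. length xs = L})"
proof -
  let ?U = "pmf_of_set {xs :: bool list. length xs = L}"
  let ?R = "Pi_pmf (E - {e}) [] (\<lambda>_. ?U)"
  have "file_dist E L = Pi_pmf (insert e (E - {e})) [] (\<lambda>_. ?U)"
    using e by (simp add: file_dist_def insert_absorb)
  also have "\<dots> = map_pmf (\<lambda>(y, f). f(e := y)) (pair_pmf ?U ?R)"
    using finite_E by (intro Pi_pmf_insert) auto
  finally have "map_pmf (\<lambda>F. (m F, F e)) (file_dist E L)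
      = map_pmf (\<lambda>(x, y). (y, x)) (map_pmf (\<lambda>(y, f). (id y, m f)) (pair_pmf ?U ?R))"
    by (simp add: map_pmf_comp split_beta' m)
  also have "\<dots> = pair_pmf (map_pmf m ?R) ?U"
    unfolding map_pair pmf.map_id by (rule pair_commute_pmf[symmetric])
  finally have split: "map_pmf (\<lambda>F. (m F, F e)) (file_dist E L) = pair_pmf (map_pmf m ?R) ?U" .
  have "map_pmf m (file_dist E L) = map_pmf fst (map_pmf (\<lambda>F. (m F, F e)) (file_dist E L))"
    by (simp add: map_pmf_comp)
  also have "\<dots> = map_pmf m ?R"
    unfolding split map_fst_pair_pmf ..
  finally show ?thesis
    using split by simp
qed

lemma file_dist_component:
  "e \<in> E \<Longrightarrow> map_pmf (\<lambda>F. F e) (file_dist E L) = pmf_of_set {xs. length xs = L}"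
  using finite_E by (simp add: file_dist_def Pi_pmf_component)

lemma cond_ent_file:
  assumes A: "finite (set_pmf A)" and e: "e \<in> E" and m: "\<And>F y. m (F(e := y)) = m F"
  shows "cond_ent (pair_pmf A (file_dist E L)) (\<lambda>w. snd w e) (\<lambda>w. (fst w, m (snd w))) = L"
proof -
  let ?mu = "pair_pmf A (file_dist E L)"
  let ?U = "pmf_of_set {xs :: bool list. length xs = L}"
  have fin: "finite (set_pmf ?mu)"
    using A finite_set_pmf_file_dist by simp
  have "ent ?mu (\<lambda>w. (snd w e, fst w, m (snd w))) = ent ?mu (\<lambda>w. (fst w, m (snd w), snd w e))"
    using fin by (intro ent_eq_determines determinesI) auto
  also have "\<dots> = ent ?mu fst + ent ?mu (\<lambda>w. (m (snd w), snd w e))"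
    using ent_pair_pmf_indep[OF A finite_set_pmf_file_dist, of "\<lambda>a. a" "\<lambda>F. (m F, F e)"] by simp
  also have "ent ?mu (\<lambda>w. (m (snd w), snd w e)) = ent ?mu (\<lambda>w. m (snd w)) + ent ?mu (\<lambda>w. snd w e)"
  proof (subst ent_pair_eq_iff_indep[OF fin])
    have "map_pmf (\<lambda>w. (m (snd w), snd w e)) ?mu = map_pmf (\<lambda>F. (m F, F e)) (file_dist E L)"
      by (rule map_pmf_snd_pair_pmf)
    also have "\<dots> = pair_pmf (map_pmf m (file_dist E L)) ?U"
      by (rule file_dist_split[OF e m])
    also have "map_pmf m (file_dist E L) = map_pmf (\<lambda>w. m (snd w)) ?mu"
      by (rule map_pmf_snd_pair_pmf[symmetric])
    also have "?U = map_pmf (\<lambda>w. snd w e) ?mu"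
      unfolding file_dist_component[OF e, symmetric] by (rule map_pmf_snd_pair_pmf[symmetric])
    finally show "map_pmf (\<lambda>w. (m (snd w), snd w e)) ?mu
        = pair_pmf (map_pmf (\<lambda>w. m (snd w)) ?mu) (map_pmf (\<lambda>w. snd w e) ?mu)" .
  qed
  also have "ent ?mu (\<lambda>w. snd w e) = L"
  proof -
    have "map_pmf (\<lambda>w. snd w e) ?mu = ?U"
      unfolding file_dist_component[OF e, symmetric] by (rule map_pmf_snd_pair_pmf)
    moreover have "card {xs :: bool list. length xs = L} = 2 ^ L"
      using card_lists_length_eq[of "UNIV :: bool set" L] by simp
    ultimately show ?thesis
      using finite_lists_length_eq[of "UNIV :: bool set" L]
      by (subst ent_pmf_of_set[where A = "{xs. length xs = L}"]) (auto intro: exI[of _ "replicate L False"])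
  qed
  finally show ?thesis
    using ent_pair_pmf_indep[OF A finite_set_pmf_file_dist, of "\<lambda>a. a" m] by (simp add: cond_ent_def)
qed

lemma query_indep_theta:
  assumes T: "T \<in> V"
  shows "map_pmf (\<lambda>p. (fst p, snd p T)) P = pair_pmf (map_pmf fst P) (map_pmf (\<lambda>p. snd p T) P)"
proof -
  let ?mu = "pir_space P E L"
  let ?theta = "\<lambda>w. fst (fst w)"
  let ?view = "\<lambda>w. (query T w, stored_files E T (snd w))"
  have theta: "map_pmf ?theta ?mu = pmf_of_set E"
    using scheme by (simp add: pir_space_def pir_scheme_def map_pmf_fst_pair_pmf)
  then have "cond_ent ?mu ?theta ?view = ent ?mu ?theta"
    using scheme T finite_E by (simp add: pir_scheme_def pir_space_def ent_pmf_of_set)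
  then have indep: "map_pmf (\<lambda>w. (?theta w, ?view w)) ?mu = pair_pmf (map_pmf ?theta ?mu) (map_pmf ?view ?mu)"
    using finite_set_pmf_pir_space by (simp add: cond_ent_eq_ent_iff_indep)
  have "map_pmf (\<lambda>w. (?theta w, query T w)) ?mu
      = map_pmf (\<lambda>(t, v). (id t, fst v)) (map_pmf (\<lambda>w. (?theta w, ?view w)) ?mu)"
    by (simp add: map_pmf_comp)
  also have "\<dots> = pair_pmf (map_pmf id (map_pmf ?theta ?mu)) (map_pmf fst (map_pmf ?view ?mu))"
    unfolding indep by (rule map_pair)
  finally have "map_pmf (\<lambda>w. (?theta w, query T w)) ?mu = pair_pmf (map_pmf ?theta ?mu) (map_pmf (query T) ?mu)"
    by (simp add: map_pmf_comp)
  moreover have "map_pmf (\<lambda>w. (?theta w, query T w)) ?mu = map_pmf (\<lambda>p. (fst p, snd p T)) P"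
    unfolding pir_space_def by (rule map_pmf_fst_pair_pmf)
  moreover have "map_pmf ?theta ?mu = map_pmf fst P" "map_pmf (query T) ?mu = map_pmf (\<lambda>p. snd p T) P"
    unfolding pir_space_def by (rule map_pmf_fst_pair_pmf)+
  ultimately show ?thesis
    by simp
qed

lemma query_distr_given:
  assumes "T \<in> V" "e \<in> E"
  shows "map_pmf (\<lambda>p. snd p T) (cond_pmf P {p. fst p = e}) = map_pmf (\<lambda>p. snd p T) P"
  using theta_event_nonempty[OF assms(2)] by (intro map_pmf_cond_pmf_indep[OF query_indep_theta[OF assms(1)]]) auto

lemma ent_given:
  assumes "T \<in> V" "e \<in> E"
  shows "ent (pir_space_given e) (\<lambda>w. h (query T w) (snd w)) = ent (pir_space P E L) (\<lambda>w. h (query T w) (snd w))"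
  unfolding pir_space_given_def pir_space_def
  by (rule ent_pair_pmf_cong[OF query_distr_given[OF assms]])

lemma cond_ent_given:
  assumes "T \<in> V" "e \<in> E"
  shows "cond_ent (pir_space_given e) (\<lambda>w. y (query T w) (snd w)) (\<lambda>w. (fst w, z (query T w) (snd w)))
       = cond_ent (pir_space P E L) (\<lambda>w. y (query T w) (snd w)) (\<lambda>w. (query T w, z (query T w) (snd w)))"
proof -
  let ?A = "cond_pmf P {p. fst p = e}"
  let ?Y = "\<lambda>w. y (query T w) (snd w)"
  let ?Z = "\<lambda>w. z (query T w) (snd w)"
  have fin: "finite (set_pmf ?A)"
    by (rule finite_set_pmf_cond_theta[OF assms(2)])
  have "cond_ent (pair_pmf ?A (file_dist E L)) ?Y (\<lambda>w. (fst w, ?Z w))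
      = cond_ent (pair_pmf ?A (file_dist E L)) ?Y (\<lambda>w. (query T w, ?Z w))"
    by (rule cond_ent_pair_pmf_markov'[OF fin finite_set_pmf_file_dist, of y "\<lambda>p. snd p T" z])
  also have "\<dots> = cond_ent (pair_pmf P (file_dist E L)) ?Y (\<lambda>w. (query T w, ?Z w))"
    by (rule cond_ent_pair_pmf_cong[OF query_distr_given[OF assms]])
  finally show ?thesis
    unfolding pir_space_given_def pir_space_def .
qed

lemma file_recoverable:
  assumes e: "e \<in> E" and w: "w \<in> set_pmf (pir_space_given e)" and w': "w' \<in> set_pmf (pir_space_given e)"
    and "snd (fst w) = snd (fst w')" and "\<And>T. T \<in> V \<Longrightarrow> answer E ans T w = answer E ans T w'"
  shows "snd w e = snd w' e"
proof -
  have "determines (pir_space P E L) (\<lambda>om. (\<lambda>T. if T \<in> V then Some (snd (fst om) T) else None,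
      \<lambda>T. if T \<in> V then Some (answer E ans T om) else None)) (\<lambda>om. snd om (fst (fst om)))"
    using scheme finite_set_pmf_pir_space by (intro determines_if_cond_ent_eq_0) (simp_all add: pir_scheme_def)
  moreover have "w \<in> set_pmf (pir_space P E L)" "w' \<in> set_pmf (pir_space P E L)"
    "fst (fst w) = e" "fst (fst w') = e"
    using w w' by (simp_all add: set_pmf_pir_space_given[OF e])
  moreover have "(\<lambda>T. if T \<in> V then Some (query T w) else None, \<lambda>T. if T \<in> V then Some (answer E ans T w) else None)
      = (\<lambda>T. if T \<in> V then Some (query T w') else None, \<lambda>T. if T \<in> V then Some (answer E ans T w') else None)"
    using assms(4,5) by (simp add: fun_eq_iff)
  ultimately show ?thesis
    by (metis (no_types, lifting) determinesD)
qed

end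

locale pir_server = pir V E L P ans
  for V :: "'s set" and E L P and ans :: "'s \<Rightarrow> 'q \<Rightarrow> ('s set \<Rightarrow> bool list) \<Rightarrow> 'a" +
  fixes S :: 's and nb :: "nat \<Rightarrow> 's"
  assumes S_in_V: "S \<in> V"
    and nb_bij: "bij_betw nb {1..card (nbrs E S)} (nbrs E S)"
begin

abbreviation deg :: nat where
  "deg \<equiv> card (nbrs E S)"

definition nb_edge :: "nat \<Rightarrow> 's set" where
  "nb_edge k = {S, nb k}"

definition masked :: "nat \<Rightarrow> ('s set \<Rightarrow> bool list) \<Rightarrow> ('s set \<Rightarrow> bool list)" where
  "masked i F = (\<lambda>e. if e \<in> nb_edge ` {i..deg} then [] else F e)"

definition residual :: "nat \<Rightarrow> real" where
  "residual i = cond_ent (pir_space P E L) (answer E ans S) (\<lambda>w. (query S w, masked i (snd w)))"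

lemma nb_edge_in_E: "k \<in> {1..deg} \<Longrightarrow> nb_edge k \<in> E"
  using bij_betw_apply[OF nb_bij] by (simp add: nb_edge_def nbrs_def)

lemma nb_edge_subset_card:
  assumes "k \<in> {1..deg}"
  shows "nb_edge k \<subseteq> V" "card (nb_edge k) = 2"
  using nb_edge_in_E[OF assms] scheme by (simp_all add: pir_scheme_def simple_graph_def)

lemma nb_in_V: "k \<in> {1..deg} \<Longrightarrow> nb k \<in> V"
  using nb_edge_subset_card(1) by (simp add: nb_edge_def)

lemma nb_neq_S: "k \<in> {1..deg} \<Longrightarrow> nb k \<noteq> S"
  using nb_edge_subset_card(2)[of k] by (auto simp: nb_edge_def)

lemma nb_edge_notin_later: "i \<in> {1..deg} \<Longrightarrow> nb_edge i \<notin> nb_edge ` {Suc i..deg}"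
proof
  assume i: "i \<in> {1..deg}" and "nb_edge i \<in> nb_edge ` {Suc i..deg}"
  then obtain k where k: "k \<in> {Suc i..deg}" "{S, nb i} = {S, nb k}"
    by (auto simp: nb_edge_def)
  then have "nb i = nb k"
    using nb_neq_S[OF i] by (auto simp: doubleton_eq_iff)
  moreover have "k \<in> {1..deg}"
    using i k(1) by simp
  ultimately show False
    using i k(1) bij_betw_imp_inj_on[OF nb_bij] by (auto dest: inj_onD)
qed

lemma stored_files_masked:
  assumes "T \<noteq> S" "T \<notin> nb ` {i..deg}"
  shows "stored_files E T (masked i F) = stored_files E T F"
  using assms by (auto simp: stored_files_def masked_def nb_edge_def fun_eq_iff)

lemma masked_upd: "i \<in> {1..deg} \<Longrightarrow> masked i (F(nb_edge i := y)) = masked i F"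
  by (auto simp: masked_def fun_eq_iff)

lemma masked_Suc_eq_iff:
  assumes "i \<in> {1..deg}"
  shows "masked (Suc i) F = masked (Suc i) F' \<longleftrightarrow> masked i F = masked i F' \<and> F (nb_edge i) = F' (nb_edge i)"
proof -
  have "{i..deg} = insert i {Suc i..deg}"
    using assms by auto
  then have "nb_edge ` {i..deg} = insert (nb_edge i) (nb_edge ` {Suc i..deg})"
    by simp
  then have "masked (Suc i) G = (masked i G)(nb_edge i := G (nb_edge i))"
    and "masked i G = (masked (Suc i) G)(nb_edge i := [])" for G
    using nb_edge_notin_later[OF assms] by (auto simp: masked_def fun_eq_iff)
  then show ?thesis
    by (metis fun_upd_same)
qed

lemma answer_masked:
  assumes "T \<noteq> S" "T \<notin> nb ` {i..deg}"
  shows "answer E ans T w = ans T (query T w) (stored_files E T (masked i (snd w)))"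
  using assms by (simp add: answer_def stored_files_masked)

lemma masked_answers_determine_file:
  assumes i: "i \<in> {1..deg}"
  shows "determines (pir_space_given (nb_edge i))
           (\<lambda>w. (((fst w, masked i (snd w)), answer E ans S w), restrict (\<lambda>k. answer E ans (nb k) w) {i..deg}))
           (\<lambda>w. snd w (nb_edge i))"
proof (rule determinesI)
  fix w w' assume w: "w \<in> set_pmf (pir_space_given (nb_edge i))" and w': "w' \<in> set_pmf (pir_space_given (nb_edge i))"
    and eq: "(((fst w, masked i (snd w)), answer E ans S w), restrict (\<lambda>k. answer E ans (nb k) w) {i..deg})
      = (((fst w', masked i (snd w')), answer E ans S w'), restrict (\<lambda>k. answer E ans (nb k) w') {i..deg})"
  have "answer E ans T w = answer E ans T w'" for T
  proof -
    consider "T = S" | k where "k \<in> {i..deg}" "T = nb k" | "T \<noteq> S" "T \<notin> nb ` {i..deg}"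
      by blast
    then show ?thesis
    proof cases
      case (2 k)
      then show ?thesis
        using fun_cong[OF conjunct2[OF eq[unfolded prod.inject]], of k] by simp
    next
      case 3
      then show ?thesis
        using eq by (simp add: answer_masked)
    qed (use eq in simp)
  qed
  then show "snd w (nb_edge i) = snd w' (nb_edge i)"
    using eq by (intro file_recoverable[OF nb_edge_in_E[OF i] w w']) simp_all
qed

lemma residual_nonneg: "0 \<le> residual i"
  unfolding residual_def by (rule cond_ent_nonneg[OF finite_set_pmf_pir_space])

lemma residual_le_ent: "residual i \<le> ent (pir_space P E L) (answer E ans S)"
  unfolding residual_def by (rule cond_ent_le_ent[OF finite_set_pmf_pir_space])

lemma residual_Suc:
  assumes "i \<in> {1..deg}"
  shows "residual (Suc i)
       = cond_ent (pir_space P E L) (answer E ans S) (\<lambda>w. (query S w, masked i (snd w), snd w (nb_edge i)))"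
  unfolding residual_def using finite_set_pmf_pir_space
  by (rule cond_ent_cong) (auto intro: determinesI simp: masked_Suc_eq_iff[OF assms])

lemma residual_Suc_le:
  assumes "i \<in> {1..deg}"
  shows "residual (Suc i) \<le> residual i"
proof -
  have "residual (Suc i)
      = cond_ent (pir_space P E L) (answer E ans S) (\<lambda>w. ((query S w, masked i (snd w)), snd w (nb_edge i)))"
    unfolding residual_Suc[OF assms] using finite_set_pmf_pir_space
    by (rule cond_ent_cong) (auto intro: determinesI)
  also have "\<dots> \<le> residual i"
    unfolding residual_def using finite_set_pmf_pir_space by (rule cond_ent_pair_le)
  finally show ?thesis .
qed

lemma cond_ent_file_le_answers:
  assumes i: "i \<in> {1..deg}"
  shows "cond_ent (pir_space_given (nb_edge i)) (\<lambda>w. snd w (nb_edge i))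
           (\<lambda>w. ((fst w, masked i (snd w)), answer E ans S w))
         \<le> (\<Sum>j=i..deg. ent (pir_space P E L) (answer E ans (nb j)))"
proof -
  let ?e = "nb_edge i"
  let ?mu = "pir_space_given ?e"
  let ?B = "\<lambda>w. restrict (\<lambda>k. answer E ans (nb k) w) {i..deg}"
  have e: "?e \<in> E"
    using nb_edge_in_E[OF i] .
  have fin: "finite (set_pmf ?mu)"
    by (rule finite_set_pmf_pir_space_given[OF e])
  have "cond_ent ?mu (\<lambda>w. snd w ?e) (\<lambda>w. ((fst w, masked i (snd w)), answer E ans S w))
      \<le> cond_ent ?mu ?B (\<lambda>w. ((fst w, masked i (snd w)), answer E ans S w))"
    using fin masked_answers_determine_file[OF i] by (rule cond_ent_le_if_determines)
  also have "\<dots> \<le> ent ?mu ?B"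
    by (rule cond_ent_le_ent[OF fin])
  also have "\<dots> \<le> (\<Sum>j\<in>{i..deg}. ent ?mu (answer E ans (nb j)))"
    by (rule ent_restrict_le_sum[OF fin]) simp
  also have "\<dots> = (\<Sum>j=i..deg. ent (pir_space P E L) (answer E ans (nb j)))"
  proof (intro sum.cong refl)
    fix j assume "j \<in> {i..deg}"
    then have "nb j \<in> V"
      using i by (intro nb_in_V) simp
    then show "ent ?mu (answer E ans (nb j)) = ent (pir_space P E L) (answer E ans (nb j))"
      unfolding answer_altdef by (rule ent_given[OF _ e])
  qed
  finally show ?thesis .
qed

lemma file_size_le_residual_drop:
  assumes i: "i \<in> {1..deg}"
  shows "real L - (\<Sum>j=i..deg. ent (pir_space P E L) (answer E ans (nb j))) \<le> residual i - residual (Suc i)"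
proof -
  let ?e = "nb_edge i"
  let ?mu = "pir_space_given ?e"
  let ?C = "\<lambda>w. (fst w, masked i (snd w))"
  let ?W = "\<lambda>w. snd w ?e"
  let ?A = "answer E ans S"
  have e: "?e \<in> E"
    using nb_edge_in_E[OF i] .
  have fin: "finite (set_pmf ?mu)"
    by (rule finite_set_pmf_pir_space_given[OF e])
  have file_ent: "cond_ent ?mu ?W ?C = L"
    unfolding pir_space_given_def by (intro cond_ent_file finite_set_pmf_cond_theta e masked_upd[OF i])
  have res: "cond_ent ?mu ?A ?C = residual i"
    using cond_ent_given[OF S_in_V e, of "\<lambda>q F. ans S q (stored_files E S F)" "\<lambda>q F. masked i F"]
    by (simp add: residual_def answer_altdef)
  have "cond_ent ?mu ?A (\<lambda>w. (?C w, ?W w)) = cond_ent ?mu ?A (\<lambda>w. (fst w, masked i (snd w), ?W w))"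
    using fin by (rule cond_ent_cong) (auto intro: determinesI)
  also have "\<dots> = residual (Suc i)"
    using cond_ent_given[OF S_in_V e, of "\<lambda>q F. ans S q (stored_files E S F)" "\<lambda>q F. (masked i F, F ?e)"]
    by (simp add: residual_Suc[OF i] answer_altdef)
  finally have res_Suc: "cond_ent ?mu ?A (\<lambda>w. (?C w, ?W w)) = residual (Suc i)" .
  have "cond_ent ?mu (\<lambda>w. (?W w, ?A w)) ?C = L + residual (Suc i)"
    using cond_ent_chain[OF fin, of ?W ?A ?C] file_ent res_Suc by simp
  moreover have "cond_ent ?mu (\<lambda>w. (?A w, ?W w)) ?C = residual i + cond_ent ?mu ?W (\<lambda>w. (?C w, ?A w))"
    using cond_ent_chain[OF fin, of ?A ?W ?C] res by simp
  moreover note cond_ent_pair_commute[OF fin, of ?W ?A ?C] cond_ent_file_le_answers[OF i]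
  ultimately show ?thesis
    by linarith
qed

end

theorem theorem2:
  fixes V :: "'s set" and E :: "'s set set" and L :: nat
    and P :: "('s set \<times> ('s \<Rightarrow> 'q)) pmf"
    and ans :: "'s \<Rightarrow> 'q \<Rightarrow> ('s set \<Rightarrow> bool list) \<Rightarrow> 'a"
    and S :: 's and nb :: "nat \<Rightarrow> 's"
  assumes "pir_scheme V E L P ans"
    and "S \<in> V"
    and "bij_betw nb {1..card (nbrs E S)} (nbrs E S)"
  shows "ent (pir_space P E L) (answer E ans S) \<ge>
    (\<Sum>i=1..card (nbrs E S). max 0 (real L -
        (\<Sum>j=i..card (nbrs E S). ent (pir_space P E L) (answer E ans (nb j)))))"
proof -
  interpret pir_server V E L P ans S nb
    using assms by unfold_locales
  have "(\<Sum>i=1..deg. max 0 (real L - (\<Sum>j=i..deg. ent (pir_space P E L) (answer E ans (nb j)))))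
      \<le> (\<Sum>i=1..deg. residual i - residual (Suc i))"
    using file_size_le_residual_drop residual_Suc_le by (intro sum_mono) simp
  also have "\<dots> = residual 1 - residual (Suc deg)"
    using sum_Suc_diff[of 1 deg "\<lambda>i. - residual i"] by simp
  also have "\<dots> \<le> ent (pir_space P E L) (answer E ans S)"
    using residual_le_ent[of 1] residual_nonneg[of "Suc deg"] by linarith
  finally show ?thesis .
qed

end
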